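(* Let $A_1,A_2\in\mathbb{R}_{\max}^{n\times n}$ with $A_2<CSR[A_1]$, and let $A=A_1\oplus A_2$. Then $\lambda(A)=\lambda(A_1)$, $\mathrm{crit}(A)=\mathrm{crit}(A_1)$, $CS^tR[A]=CS^tR[A_1]$ for all $t\ge1$, and $T_1(A)=T_1(A_1)$.
   Context: Max-plus semiring $\mathbb{R}_{\max}=\mathbb{R}\cup\{-\infty\}$ with $a\oplus b=\max(a,b)$, $a\otimes b=a+b$; $(A\oplus B)_{ij}=\max(a_{ij},b_{ij})$, $(AB)_{ij}=\max_k(a_{ik}+b_{kj})$; $A^t$ is the $t$-th max-plus power, $A^0=I$. $\mathcal{D}(A)$ is the digraph on $\{1,\dots,n\}$ with arc $(i,j)$ of weight $a_{ij}$ whenever $a_{ij}\ne-\infty$; walks, length (number of arcs), weight (sum of arc weights), cycles as usual. $\lambda(A)$ is the maximal cycle mean ($-\infty$ if no cycle). $\mathrm{crit}(A)$ is the subgraph of all nodes and arcs of cycles attaining $\lambda(A)$; its nodes are critical. The cyclicity of $\mathrm{crit}(A)$ is the lcm over its strongly connected components of the gcd of their cycle lengths. CSR terms: if $\lambda=\lambda(A)\ne-\infty$, with $\gamma$ the cyclicity of $\mathrm{crit}(A)$, $A_\lambda$ equal to $A$ with $\lambda$ subtracted from every finite entry, $M=I\oplus N\oplus\dots\oplus N^{n-1}$ where $N=A_\lambda^\gamma$: $c_{ij}=m_{ij}$ if $j$ critical, else $-\infty$; $r_{ij}=m_{ij}$ if $i$ critical, else $-\infty$; $s_{ij}=a_{ij}$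 if $(i,j)$ is an arc of $\mathrm{crit}(A)$, else $-\infty$; $CS^tR[A]$ is the product $CS^tR$ and $CSR[A]=CS^1R[A]$. If $\lambda(A)=-\infty$, $CS^tR[A]$ is the all-$(-\infty)$ matrix. $B_N$ has $(B_N)_{ij}=-\infty$ if $i$ or $j$ is critical and $a_{ij}$ otherwise. $T_1(A)$ is the least $T\ge0$ with $A^t=CS^tR[A]\oplus B_N^t$ for all $t\ge T$. Strict order: for matrices $X,Y$, $X<Y$ means $x_{ij}\le y_{ij}$ for all $i,j$, with $x_{ij}=y_{ij}$ only if both equal $-\infty$. *)

theory Defs
  imports "HOL-Library.Extended_Real"
begin

text \<open>Max-plus matrices of size n x n, indexed by a finite type 'n (n = CARD('n)),
  with entries in ereal; the max-plus semiring R_max is ereal without +infinity.\<close>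

type_synonym 'n mpmat = "'n \<Rightarrow> 'n \<Rightarrow> ereal"

definition rmax_mat :: "('n::finite) mpmat \<Rightarrow> bool" where
  "rmax_mat A \<longleftrightarrow> (\<forall>i j. A i j \<noteq> \<infinity>)"

definition mp_add :: "('n::finite) mpmat \<Rightarrow> 'n mpmat \<Rightarrow> 'n mpmat" where
  "mp_add A B = (\<lambda>i j. max (A i j) (B i j))"

definition mp_mult :: "('n::finite) mpmat \<Rightarrow> 'n mpmat \<Rightarrow> 'n mpmat" where
  "mp_mult A B = (\<lambda>i j. Max (range (\<lambda>k. A i k + B k j)))"

definition mp_one :: "('n::finite) mpmat" where
  "mp_one = (\<lambda>i j. if i = j then 0 else -\<infinity>)"

fun mp_pow :: "('n::finite) mpmat \<Rightarrow> nat \<Rightarrow> 'n mpmat" where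
  "mp_pow A 0 = mp_one"
| "mp_pow A (Suc t) = mp_mult (mp_pow A t) A"

definition mp_bot :: "('n::finite) mpmat" where
  "mp_bot = (\<lambda>i j. -\<infinity>)"

definition mp_strict_less :: "('n::finite) mpmat \<Rightarrow> 'n mpmat \<Rightarrow> bool" where
  "mp_strict_less X Y \<longleftrightarrow>
     (\<forall>i j. X i j \<le> Y i j \<and> (X i j = Y i j \<longrightarrow> X i j = -\<infinity>))"

definition arcs :: "('n::finite) mpmat \<Rightarrow> ('n \<times> 'n) set" where
  "arcs A = {(i, j). A i j \<noteq> -\<infinity>}"

definition cyc_arcs :: "'a list \<Rightarrow> ('a \<times> 'a) set" where
  "cyc_arcs c = {(c ! m, c ! (Suc m mod length c)) | m. m < length c}"

definition is_cycle_in :: "('a \<times> 'a) set \<Rightarrow> 'a list \<Rightarrow> bool" where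
  "is_cycle_in E c \<longleftrightarrow> c \<noteq> [] \<and> distinct c \<and> cyc_arcs c \<subseteq> E"

definition cycles :: "('n::finite) mpmat \<Rightarrow> 'n list set" where
  "cycles A = {c. is_cycle_in (arcs A) c}"

definition cyc_weight :: "('n::finite) mpmat \<Rightarrow> 'n list \<Rightarrow> ereal" where
  "cyc_weight A c = (\<Sum>m<length c. A (c ! m) (c ! (Suc m mod length c)))"

definition cyc_mean :: "('n::finite) mpmat \<Rightarrow> 'n list \<Rightarrow> ereal" where
  "cyc_mean A c = cyc_weight A c / ereal (real (length c))"

text \<open>Maximal cycle mean; Sup of the empty set is -infinity.\<close>
definition mcm :: "('n::finite) mpmat \<Rightarrow> ereal" where
  "mcm A = (SUP c \<in> cycles A. cyc_mean A c)"

definition crit_cycles :: "('n::finite) mpmat \<Rightarrow> 'n list set" where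
  "crit_cycles A = {c \<in> cycles A. cyc_mean A c = mcm A}"

definition crit_nodes :: "('n::finite) mpmat \<Rightarrow> 'n set" where
  "crit_nodes A = (\<Union>c \<in> crit_cycles A. set c)"

definition crit_arcs :: "('n::finite) mpmat \<Rightarrow> ('n \<times> 'n) set" where
  "crit_arcs A = (\<Union>c \<in> crit_cycles A. cyc_arcs c)"

definition crit :: "('n::finite) mpmat \<Rightarrow> 'n set \<times> ('n \<times> 'n) set" where
  "crit A = (crit_nodes A, crit_arcs A)"

definition crit_scc :: "('n::finite) mpmat \<Rightarrow> 'n \<Rightarrow> 'n set" where
  "crit_scc A i = {j \<in> crit_nodes A. (i, j) \<in> (crit_arcs A)\<^sup>* \<and> (j, i) \<in> (crit_arcs A)\<^sup>*}"

definition scc_gcd :: "('n::finite) mpmat \<Rightarrow> 'n \<Rightarrow> nat" where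
  "scc_gcd A i = Gcd {length c | c. is_cycle_in (crit_arcs A) c \<and> set c \<subseteq> crit_scc A i}"

definition cyclicity :: "('n::finite) mpmat \<Rightarrow> nat" where
  "cyclicity A = Lcm (scc_gcd A ` crit_nodes A)"

definition A_lam :: "('n::finite) mpmat \<Rightarrow> 'n mpmat" where
  "A_lam A = (\<lambda>i j. if A i j = -\<infinity> then -\<infinity> else A i j - mcm A)"

definition N_mat :: "('n::finite) mpmat \<Rightarrow> 'n mpmat" where
  "N_mat A = mp_pow (A_lam A) (cyclicity A)"

definition M_mat :: "('n::finite) mpmat \<Rightarrow> 'n mpmat" where
  "M_mat A = (\<lambda>i j. Max {mp_pow (N_mat A) k i j | k. k < card (UNIV :: 'n set)})"

definition C_mat :: "('n::finite) mpmat \<Rightarrow> 'n mpmat" where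
  "C_mat A = (\<lambda>i j. if j \<in> crit_nodes A then M_mat A i j else -\<infinity>)"

definition R_mat :: "('n::finite) mpmat \<Rightarrow> 'n mpmat" where
  "R_mat A = (\<lambda>i j. if i \<in> crit_nodes A then M_mat A i j else -\<infinity>)"

definition S_mat :: "('n::finite) mpmat \<Rightarrow> 'n mpmat" where
  "S_mat A = (\<lambda>i j. if (i, j) \<in> crit_arcs A then A i j else -\<infinity>)"

definition CStR :: "('n::finite) mpmat \<Rightarrow> nat \<Rightarrow> 'n mpmat" where
  "CStR A t = (if mcm A = -\<infinity> then mp_bot
               else mp_mult (mp_mult (C_mat A) (mp_pow (S_mat A) t)) (R_mat A))"

definition CSR :: "('n::finite) mpmat \<Rightarrow> 'n mpmat" where
  "CSR A = CStR A 1"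

definition B_N :: "('n::finite) mpmat \<Rightarrow> 'n mpmat" where
  "B_N A = (\<lambda>i j. if i \<in> crit_nodes A \<or> j \<in> crit_nodes A then -\<infinity> else A i j)"

definition T1 :: "('n::finite) mpmat \<Rightarrow> nat" where
  "T1 A = (LEAST T. \<forall>t\<ge>T. mp_pow A t = mp_add (CStR A t) (mp_pow (B_N A) t))"

end

theory Submission
  imports Defs
begin

text \<open>
  Entries of max-plus powers are maximal walk weights. After subtracting \<open>\<lambda> = \<lambda>(A\<^sub>1)\<close> from
  every entry, closed walks of \<open>A\<^sub>1\<close> have weight \<open>\<le> 0\<close>, the critical cycles weight \<open>0\<close>, and
  every walk through a critical node whose length is \<open>t\<close> modulo the cyclicity \<open>\<gamma>\<close> has
  weight at most \<open>CS\<^sup>tR[A\<^sub>1]\<close>. Where \<open>A\<^sub>2\<close> beats \<open>A\<^sub>1\<close>, its entry lies strictly below \<open>CSR[A\<^sub>1]\<close>,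
  which is the weight of a walk of \<open>A\<^sub>1\<close> of length \<open>1\<close> modulo \<open>\<gamma>\<close> through a critical node. So
  every walk of \<open>A\<close> can be replaced by a walk of \<open>A\<^sub>1\<close> with the same end points and length
  modulo \<open>\<gamma>\<close>, of at least the same weight, and of strictly larger weight passing through a
  critical node if an arc of \<open>A\<^sub>2\<close> was used. Hence cycles using such arcs are not critical,
  which gives \<open>\<lambda>(A) = \<lambda>(A\<^sub>1)\<close> and \<open>crit(A) = crit(A\<^sub>1)\<close>; walks of length divisible by \<open>\<gamma>\<close>
  give the same matrix \<open>M\<close>, hence the same CSR terms; and every entry of \<open>A\<^sup>t\<close> or \<open>B\<^sub>N\<^sup>t\<close> either
  agrees with the one for \<open>A\<^sub>1\<close> or is strictly below \<open>CS\<^sup>tR[A\<^sub>1]\<close>, which does not affect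
  whether \<open>A\<^sup>t = CS\<^sup>tR \<oplus> B\<^sub>N\<^sup>t\<close> holds.
\<close>

lemma ereal_MInf_add [simp]: "(y::ereal) \<noteq> \<infinity> \<Longrightarrow> -\<infinity> + y = -\<infinity>"
  by (cases y) auto

lemma ereal_add_MInf [simp]: "(y::ereal) \<noteq> \<infinity> \<Longrightarrow> y + -\<infinity> = -\<infinity>"
  by (cases y) auto

lemma ex_less_card_UNIV: "\<exists>k. k < card (UNIV :: 'n::finite set)"
  by (rule exI[of _ 0]) (simp add: card_gt_0_iff)

lemma ereal_add_less_add_finite:
  fixes a b c d :: ereal
  assumes "a \<le> b" "c \<le> d" "a + c \<noteq> -\<infinity>" "a \<noteq> \<infinity>" "c \<noteq> \<infinity>" "a < b \<or> c < d"
  shows "a + c < b + d"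
proof -
  have fin: "\<bar>a\<bar> \<noteq> \<infinity>" "\<bar>c\<bar> \<noteq> \<infinity>" using assms(3-5) by auto
  from assms(6) show ?thesis
  proof
    assume "a < b"
    then have "a + c < b + c" using ereal_less_add[OF fin(2)] by (simp add: add.commute)
    also have "\<dots> \<le> b + d" using assms(2) by (rule add_left_mono)
    finally show ?thesis .
  next
    assume "c < d"
    then have "a + c < a + d" by (rule ereal_less_add[OF fin(1)])
    also have "\<dots> \<le> b + d" using assms(1) by (rule add_right_mono)
    finally show ?thesis .
  qed
qed

lemma add_zero_loop_rearrange:
  fixes a b c e f u :: "'a::comm_monoid_add"
  assumes "b + (c + e) = 0"
  shows "a + f + u = (a + b) + (c + u) + (e + f)"
proof -
  have "a + f + u = (a + f + u) + (b + (c + e))" using assms by simp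
  also have "\<dots> = (a + b) + (c + u) + (e + f)" by (simp add: ac_simps)
  finally show ?thesis .
qed

lemma max_eq_transfer:
  fixes a a1 b b1 k :: "'a::linorder"
  assumes "a = a1 \<or> a < k" "b = b1 \<or> b < k" "a1 \<le> a" "b1 \<le> b"
  shows "a = max k b \<longleftrightarrow> a1 = max k b1"
  using assms by (auto simp: max_def)

lemma not_inj_on_obtain_less:
  fixes f :: "'a::linorder \<Rightarrow> 'b"
  assumes "\<not> inj_on f S"
  obtains a b where "a \<in> S" "b \<in> S" "a < b" "f a = f b"
  using assms unfolding inj_on_def by (metis linorder_neqE)

section \<open>Walks and max-plus powers\<close>

text \<open>A walk of length \<open>l\<close> is any \<open>p :: nat \<Rightarrow> 'n\<close>; only \<open>p 0, \<dots>, p l\<close> matter.\<close>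

definition walk_weight :: "('n::finite) mpmat \<Rightarrow> nat \<Rightarrow> (nat \<Rightarrow> 'n) \<Rightarrow> ereal" where
  "walk_weight X l p = (\<Sum>m<l. X (p m) (p (Suc m)))"

definition walk_suffix :: "nat \<Rightarrow> (nat \<Rightarrow> 'a) \<Rightarrow> nat \<Rightarrow> 'a" where
  "walk_suffix a p = (\<lambda>m. p (a + m))"

definition walk_join :: "nat \<Rightarrow> (nat \<Rightarrow> 'a) \<Rightarrow> (nat \<Rightarrow> 'a) \<Rightarrow> nat \<Rightarrow> 'a" where
  "walk_join l p q = (\<lambda>m. if m \<le> l then p m else q (m - l))"

lemma walk_weight_0 [simp]: "walk_weight X 0 p = 0"
  by (simp add: walk_weight_def)

lemma walk_weight_Suc: "walk_weight X (Suc l) p = walk_weight X l p + X (p l) (p (Suc l))"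
  by (simp add: walk_weight_def)

lemma walk_weight_cong: "(\<And>m. m \<le> l \<Longrightarrow> p m = q m) \<Longrightarrow> walk_weight X l p = walk_weight X l q"
  unfolding walk_weight_def by (rule sum.cong) auto

lemma walk_weight_add:
  "walk_weight X (a + b) p = walk_weight X a p + walk_weight X b (walk_suffix a p)"
proof (induction b)
  case (Suc b)
  then show ?case by (simp add: walk_weight_Suc walk_suffix_def add.assoc)
qed simp

lemma walk_join_0 [simp]: "walk_join l p q 0 = p 0"
  by (simp add: walk_join_def)

lemma walk_join_end: "p l = q 0 \<Longrightarrow> walk_join l p q (l + l2) = q l2"
  by (auto simp: walk_join_def)

lemma walk_weight_join:
  assumes "p l = q 0"
  shows "walk_weight X (l + l2) (walk_join l p q) = walk_weight X l p + walk_weight X l2 q"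
proof -
  have "walk_weight X l (walk_join l p q) = walk_weight X l p"
    by (rule walk_weight_cong) (simp add: walk_join_def)
  moreover have "walk_suffix l (walk_join l p q) = q"
    using assms by (auto simp: walk_suffix_def walk_join_def)
  ultimately show ?thesis by (simp add: walk_weight_add)
qed

lemma walk_weight_cut:
  assumes "a \<le> b" "b \<le> l" "p a = p b"
  shows "walk_weight X l p = walk_weight X (b - a) (walk_suffix a p)
           + walk_weight X (a + (l - b)) (walk_join a p (walk_suffix b p))"
proof -
  have "walk_suffix (b - a) (walk_suffix a p) = walk_suffix b p"
    using assms by (auto simp: walk_suffix_def fun_eq_iff)
  then have "walk_weight X l p = walk_weight X a p + walk_weight X (b - a) (walk_suffix a p)
      + walk_weight X (l - b) (walk_suffix b p)"
    using assms walk_weight_add[of X a "(b - a) + (l - b)" p]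
      walk_weight_add[of X "b - a" "l - b" "walk_suffix a p"]
    by (simp add: add.assoc)
  moreover have "walk_weight X (a + (l - b)) (walk_join a p (walk_suffix b p))
      = walk_weight X a p + walk_weight X (l - b) (walk_suffix b p)"
    using assms by (intro walk_weight_join) (simp add: walk_suffix_def)
  ultimately show ?thesis by (simp add: ac_simps)
qed

lemma walk_weight_mono: "(\<And>i j. X i j \<le> Y i j) \<Longrightarrow> walk_weight X l p \<le> walk_weight Y l p"
  unfolding walk_weight_def by (rule sum_mono) auto

lemma walk_weight_not_PInf: "rmax_mat X \<Longrightarrow> walk_weight X l p \<noteq> \<infinity>"
  unfolding walk_weight_def rmax_mat_def by (simp add: sum_Pinfty)

lemma walk_weight_eq_MInf_iff:
  "rmax_mat X \<Longrightarrow> walk_weight X l p = -\<infinity> \<longleftrightarrow> (\<exists>m<l. X (p m) (p (Suc m)) = -\<infinity>)"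
proof (induction l)
  case (Suc l)
  then show ?case using walk_weight_not_PInf[OF Suc.prems, of l p]
    by (auto simp: walk_weight_Suc rmax_mat_def less_Suc_eq)
qed simp

lemma mp_mult_attained: "\<exists>k. mp_mult X Y i j = X i k + Y k j"
proof -
  have "mp_mult X Y i j \<in> range (\<lambda>k. X i k + Y k j)"
    unfolding mp_mult_def by (rule Max_in) auto
  then show ?thesis by auto
qed

lemma mp_mult_ge: "X i k + Y k j \<le> mp_mult X Y i j"
  by (simp add: mp_mult_def)

lemma walk_weight_le_mp_pow: "walk_weight X l p \<le> mp_pow X l (p 0) (p l)"
proof (induction l)
  case 0 then show ?case by (simp add: mp_one_def)
next
  case (Suc l)
  have "walk_weight X (Suc l) p \<le> mp_pow X l (p 0) (p l) + X (p l) (p (Suc l))"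
    using Suc by (simp add: walk_weight_Suc add_right_mono)
  also have "\<dots> \<le> mp_pow X (Suc l) (p 0) (p (Suc l))"
    by (simp add: mp_mult_ge)
  finally show ?case .
qed

lemma mp_pow_not_PInf: "rmax_mat X \<Longrightarrow> mp_pow X l i j \<noteq> \<infinity>"
proof (induction l arbitrary: j)
  case 0 then show ?case by (simp add: mp_one_def)
next
  case (Suc l)
  obtain k where "mp_pow X (Suc l) i j = mp_pow X l i k + X k j"
    using mp_mult_attained by (fastforce simp del: mp_pow.simps simp: mp_pow.simps(2))
  then show ?case using Suc by (auto simp: rmax_mat_def)
qed

lemma mp_pow_attained:
  assumes "rmax_mat X" "mp_pow X l i j \<noteq> -\<infinity>"
  shows "\<exists>p. p 0 = i \<and> p l = j \<and> walk_weight X l p = mp_pow X l i j"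
  using assms(2)
proof (induction l arbitrary: j)
  case 0 then show ?case by (intro exI[of _ "\<lambda>_. i"]) (auto simp: mp_one_def split: if_splits)
next
  case (Suc l)
  obtain k where k: "mp_pow X (Suc l) i j = mp_pow X l i k + X k j"
    using mp_mult_attained by (fastforce simp del: mp_pow.simps simp: mp_pow.simps(2))
  have "mp_pow X l i k \<noteq> -\<infinity>" using k Suc.prems assms(1) by (auto simp: rmax_mat_def)
  then obtain p where p: "p 0 = i" "p l = k" "walk_weight X l p = mp_pow X l i k"
    using Suc.IH by blast
  define q where "q = p(Suc l := j)"
  have "walk_weight X l q = walk_weight X l p" by (rule walk_weight_cong) (simp add: q_def)
  then have "walk_weight X (Suc l) q = mp_pow X (Suc l) i j"
    using p k by (simp add: walk_weight_Suc q_def)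
  moreover have "q 0 = i" "q (Suc l) = j" using p by (auto simp: q_def)
  ultimately show ?case by blast
qed

lemma mp_pow_mono:
  assumes "rmax_mat X" "\<And>i j. X i j \<le> Y i j"
  shows "mp_pow X l i j \<le> mp_pow Y l i j"
proof (cases "mp_pow X l i j = -\<infinity>")
  case False
  then obtain p where "p 0 = i" "p l = j" "walk_weight X l p = mp_pow X l i j"
    using mp_pow_attained[OF assms(1)] by blast
  then show ?thesis
    using walk_weight_mono[of X Y l p, OF assms(2)] walk_weight_le_mp_pow[of Y l p] by simp
qed simp

lemma mp_pow_add:
  assumes "rmax_mat X"
  shows "mp_pow X (a + b) i j = Max (range (\<lambda>k. mp_pow X a i k + mp_pow X b k j))"
proof (rule antisym)
  show "mp_pow X (a + b) i j \<le> Max (range (\<lambda>k. mp_pow X a i k + mp_pow X b k j))"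
  proof (cases "mp_pow X (a + b) i j = -\<infinity>")
    case False
    then obtain r where r: "r 0 = i" "r (a + b) = j" "walk_weight X (a + b) r = mp_pow X (a + b) i j"
      using mp_pow_attained[OF assms] by blast
    have "walk_weight X (a + b) r \<le> mp_pow X a i (r a) + mp_pow X b (r a) j"
      unfolding walk_weight_add using r walk_weight_le_mp_pow[of X a r]
        walk_weight_le_mp_pow[of X b "walk_suffix a r"]
      by (intro add_mono) (auto simp: walk_suffix_def)
    also have "\<dots> \<le> Max (range (\<lambda>k. mp_pow X a i k + mp_pow X b k j))" by simp
    finally show ?thesis using r by simp
  qed simp
next
  show "Max (range (\<lambda>k. mp_pow X a i k + mp_pow X b k j)) \<le> mp_pow X (a + b) i j"
  proof (rule Max.boundedI)
    fix x assume "x \<in> range (\<lambda>k. mp_pow X a i k + mp_pow X b k j)"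
    then obtain k where x: "x = mp_pow X a i k + mp_pow X b k j" by auto
    show "x \<le> mp_pow X (a + b) i j"
    proof (cases "mp_pow X a i k = -\<infinity> \<or> mp_pow X b k j = -\<infinity>")
      case True then show ?thesis using x mp_pow_not_PInf[OF assms] by auto
    next
      case False
      obtain p where p: "p 0 = i" "p a = k" "walk_weight X a p = mp_pow X a i k"
        using mp_pow_attained[OF assms] False by blast
      obtain q where q: "q 0 = k" "q b = j" "walk_weight X b q = mp_pow X b k j"
        using mp_pow_attained[OF assms] False by blast
      show ?thesis
        using walk_weight_le_mp_pow[of X "a + b" "walk_join a p q"] p q x
        by (simp add: walk_weight_join walk_join_end)
    qed
  qed auto
qed

lemma mp_pow_mp_pow: "rmax_mat X \<Longrightarrow> mp_pow (mp_pow X g) q = mp_pow X (g * q)"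
proof (induction q)
  case (Suc q)
  have "mp_pow X (g * Suc q) = mp_pow X (g * q + g)" by (simp add: add.commute)
  then show ?case using Suc by (auto simp: mp_mult_def mp_pow_add fun_eq_iff)
qed simp

lemma mp_pow_1:
  assumes "rmax_mat X"
  shows "mp_pow X 1 = X"
proof (intro ext)
  fix i j
  have "Max (range (\<lambda>k. mp_one i k + X k j)) = X i j"
  proof (rule Max_eqI)
    fix y assume "y \<in> range (\<lambda>k. mp_one i k + X k j)"
    then show "y \<le> X i j" using assms by (auto simp: mp_one_def rmax_mat_def)
  qed (auto simp: mp_one_def intro: image_eqI[of _ _ i])
  then show "mp_pow X 1 i j = X i j" by (simp add: mp_mult_def)
qed

section \<open>Normalized weights and cycles\<close>

definition mp_normalize :: "('n::finite) mpmat \<Rightarrow> real \<Rightarrow> 'n mpmat" where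
  "mp_normalize X lam = (\<lambda>i j. X i j - ereal lam)"

lemma rmax_mat_normalize: "rmax_mat X \<Longrightarrow> rmax_mat (mp_normalize X lam)"
  unfolding rmax_mat_def mp_normalize_def
proof (intro allI)
  fix i j assume "\<forall>i j. X i j \<noteq> \<infinity>"
  then show "X i j - ereal lam \<noteq> \<infinity>" by (cases "X i j") auto
qed

lemma normalize_eq_MInf_iff: "mp_normalize X lam i j = -\<infinity> \<longleftrightarrow> X i j = -\<infinity>"
  unfolding mp_normalize_def by (cases "X i j") auto

lemma A_lam_eq_normalize: "mcm X = ereal lam \<Longrightarrow> A_lam X = mp_normalize X lam"
  unfolding A_lam_def mp_normalize_def by (auto simp: fun_eq_iff)

lemma walk_weight_normalize:
  assumes "rmax_mat X"
  shows "walk_weight X l p = walk_weight (mp_normalize X lam) l p + ereal (lam * l)"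
proof (induction l)
  case 0 then show ?case by (simp add: zero_ereal_def)
next
  case (Suc l)
  have "X (p l) (p (Suc l)) \<noteq> \<infinity>" using assms by (auto simp: rmax_mat_def)
  moreover have "walk_weight (mp_normalize X lam) l p \<noteq> \<infinity>"
    using walk_weight_not_PInf[OF rmax_mat_normalize[OF assms]] by blast
  ultimately show ?case using Suc
    by (cases "X (p l) (p (Suc l))"; cases "walk_weight (mp_normalize X lam) l p")
       (auto simp: walk_weight_Suc mp_normalize_def algebra_simps)
qed

lemma finite_cycles: "finite (cycles (X::('n::finite) mpmat))"
proof -
  have "cycles X \<subseteq> {xs. set xs \<subseteq> UNIV \<and> distinct xs}"
    by (auto simp: cycles_def is_cycle_in_def)
  then show ?thesis using finite_subset_distinct[of "UNIV::'n set"] finite_subset by auto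
qed

lemma cycle_length_pos: "c \<in> cycles X \<Longrightarrow> length c > 0"
  by (auto simp: cycles_def is_cycle_in_def)

lemma cyc_weight_eq_walk_weight: "cyc_weight X c = walk_weight X (length c) (\<lambda>m. c ! (m mod length c))"
  unfolding cyc_weight_def walk_weight_def by (rule sum.cong) auto

lemma cyc_weight_finite:
  assumes "rmax_mat X" "c \<in> cycles X"
  obtains w where "cyc_weight X c = ereal w"
proof -
  have "cyc_weight X c \<noteq> \<infinity>"
    using walk_weight_not_PInf[OF assms(1)] cyc_weight_eq_walk_weight by metis
  moreover have "X (c ! m) (c ! (Suc m mod length c)) \<noteq> -\<infinity>" if "m < length c" for m
    using assms(2) that unfolding cycles_def is_cycle_in_def cyc_arcs_def arcs_def by auto
  then have "cyc_weight X c \<noteq> -\<infinity>"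
    unfolding cyc_weight_eq_walk_weight walk_weight_eq_MInf_iff[OF assms(1)]
    using cycle_length_pos[OF assms(2)] by auto
  ultimately show ?thesis using that by (cases "cyc_weight X c") auto
qed

lemma cyc_mean_ereal:
  "c \<in> cycles X \<Longrightarrow> cyc_weight X c = ereal w \<Longrightarrow> cyc_mean X c = ereal (w / length c)"
  using cycle_length_pos[of c X] by (simp add: cyc_mean_def)

lemma cyc_mean_le_iff:
  assumes "rmax_mat X" "c \<in> cycles X"
  shows "cyc_mean X c \<le> ereal lam \<longleftrightarrow> cyc_weight X c \<le> ereal (lam * length c)"
proof -
  obtain w where w: "cyc_weight X c = ereal w" using cyc_weight_finite[OF assms] .
  show ?thesis using w cyc_mean_ereal[OF assms(2) w] cycle_length_pos[OF assms(2)]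
    by (simp add: pos_divide_le_eq mult.commute)
qed

lemma cyc_mean_less_iff:
  assumes "rmax_mat X" "c \<in> cycles X"
  shows "cyc_mean X c < ereal lam \<longleftrightarrow> cyc_weight X c < ereal (lam * length c)"
proof -
  obtain w where w: "cyc_weight X c = ereal w" using cyc_weight_finite[OF assms] .
  show ?thesis using w cyc_mean_ereal[OF assms(2) w] cycle_length_pos[OF assms(2)]
    by (simp add: pos_divide_less_eq mult.commute)
qed

lemma cyc_mean_le_mcm: "c \<in> cycles X \<Longrightarrow> cyc_mean X c \<le> mcm X"
  unfolding mcm_def by (rule SUP_upper)

lemma mcm_not_PInf: "rmax_mat X \<Longrightarrow> mcm X \<noteq> \<infinity>"
proof (cases "cycles X = {}")
  case True then show ?thesis by (simp add: mcm_def bot_ereal_def)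
next
  case False
  assume r: "rmax_mat X"
  have "mcm X = Max (cyc_mean X ` cycles X)" unfolding mcm_def
    using False finite_cycles by (intro cSup_eq_Max) auto
  also have "\<dots> \<in> cyc_mean X ` cycles X" using False finite_cycles by (intro Max_in) auto
  finally obtain c where c: "c \<in> cycles X" "mcm X = cyc_mean X c" by blast
  obtain w where "cyc_weight X c = ereal w" using cyc_weight_finite[OF r c(1)] .
  then show ?thesis using cyc_mean_ereal[OF c(1)] c by simp
qed

lemma simple_closed_walk_cycle:
  assumes "l > 0" "inj_on p {..<l}" "p 0 = p l"
    and "\<And>m. m < l \<Longrightarrow> X (p m) (p (Suc m)) \<noteq> -\<infinity>"
  shows "map p [0..<l] \<in> cycles X" and "cyc_weight X (map p [0..<l]) = walk_weight X l p"
proof -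
  let ?c = "map p [0..<l]"
  have next_node: "?c ! (Suc m mod l) = p (Suc m)" if "m < l" for m
    using that assms(1,3) by (cases "Suc m = l") auto
  have "distinct ?c" using assms(2) by (simp add: distinct_map atLeast0LessThan)
  moreover have "cyc_arcs ?c \<subseteq> arcs X"
    using assms(4) next_node by (auto simp: cyc_arcs_def arcs_def)
  ultimately show "?c \<in> cycles X" using assms(1) by (simp add: cycles_def is_cycle_in_def)
  show "cyc_weight X ?c = walk_weight X l p"
    unfolding cyc_weight_def walk_weight_def using next_node by (intro sum.cong) auto
qed

lemma simple_closed_walk_normalized_nonpos:
  assumes r: "rmax_mat X" and lam: "mcm X = ereal lam"
    and "l > 0" "inj_on p {..<l}" "p 0 = p l"
  shows "walk_weight (mp_normalize X lam) l p \<le> 0"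
proof (cases "\<exists>m<l. X (p m) (p (Suc m)) = -\<infinity>")
  case True
  then have "walk_weight X l p = -\<infinity>" using walk_weight_eq_MInf_iff[OF r] by blast
  then show ?thesis using walk_weight_normalize[OF r, of l p lam] by simp
next
  case False
  note cyc = simple_closed_walk_cycle[of l p X, OF assms(3-5)] False
  have "cyc_mean X (map p [0..<l]) \<le> ereal lam" using cyc_mean_le_mcm cyc lam by metis
  then have "walk_weight X l p \<le> ereal (lam * l)"
    using cyc_mean_le_iff[OF r] cyc by simp
  then show ?thesis
    using walk_weight_normalize[OF r, of l p lam]
      walk_weight_not_PInf[OF rmax_mat_normalize[OF r], of lam l p]
    by (cases "walk_weight (mp_normalize X lam) l p") (auto simp: zero_ereal_def)
qed

text \<open>Decompose a closed walk into simple cycles by repeatedly cutting out a closed subwalk.\<close>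

lemma closed_walk_normalized_nonpos:
  assumes r: "rmax_mat X" and lam: "mcm X = ereal lam" and "p 0 = p l"
  shows "walk_weight (mp_normalize X lam) l p \<le> 0"
  using assms(3)
proof (induction l arbitrary: p rule: less_induct)
  case (less l)
  show ?case
  proof (cases "inj_on p {..<l}")
    case True
    then show ?thesis
      using simple_closed_walk_normalized_nonpos[OF r lam] less.prems by (cases "l = 0") auto
  next
    case False
    then obtain a b where "a \<in> {..<l}" "b \<in> {..<l}" "a < b" "p a = p b"
      by (rule not_inj_on_obtain_less)
    then have ab: "a < b" "b < l" "p a = p b" by auto
    let ?Z = "mp_normalize X lam"
    have "walk_weight ?Z (b - a) (walk_suffix a p) \<le> 0"
      using ab by (intro less.IH) (auto simp: walk_suffix_def)
    moreover have "walk_weight ?Z (a + (l - b)) (walk_join a p (walk_suffix b p)) \<le> 0"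
      using ab less.prems by (intro less.IH) (auto simp: walk_join_def walk_suffix_def)
    ultimately show ?thesis
      using walk_weight_cut[of a b l p ?Z] ab by (simp add: add_nonpos_nonpos)
  qed
qed

lemma walk_repeats_at_multiples:
  fixes p :: "nat \<Rightarrow> 'n::finite"
  assumes "card (UNIV :: 'n set) \<le> q"
  obtains a b where "a < b" "b \<le> q" "p (g * a) = p (g * b)"
proof -
  have "\<not> inj_on (\<lambda>m. p (g * m)) {0..q}"
  proof
    assume "inj_on (\<lambda>m. p (g * m)) {0..q}"
    then have "card {0..q} \<le> card (UNIV :: 'n set)" by (rule card_inj_on_le) auto
    then show False using assms by simp
  qed
  then obtain a b where "a \<in> {0..q}" "b \<in> {0..q}" "a < b" "p (g * a) = p (g * b)"
    by (rule not_inj_on_obtain_less)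
  then show ?thesis using that by simp
qed

text \<open>
  If closed walks have weight \<open>\<le> 0\<close>, a walk of length \<open>g q\<close> can be shortened, by cutting out
  closed subwalks of length divisible by \<open>g\<close>, until \<open>q\<close> is less than the number of nodes.
\<close>

lemma walk_weight_le_Max_mp_pow:
  fixes Z :: "('n::finite) mpmat"
  assumes rZ: "rmax_mat Z" and closed: "\<And>p l. p 0 = p l \<Longrightarrow> walk_weight Z l p \<le> 0"
  shows "walk_weight Z (g * q) p
           \<le> Max {mp_pow (mp_pow Z g) k (p 0) (p (g * q)) | k. k < card (UNIV :: 'n set)}"
proof (induction q arbitrary: p rule: less_induct)
  case (less q)
  let ?M = "\<lambda>i j. Max {mp_pow (mp_pow Z g) k i j | k. k < card (UNIV :: 'n set)}"
  show ?case
  proof (cases "q < card (UNIV :: 'n set)")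
    case True
    have "walk_weight Z (g * q) p \<le> mp_pow (mp_pow Z g) q (p 0) (p (g * q))"
      using walk_weight_le_mp_pow mp_pow_mp_pow[OF rZ] by metis
    also have "\<dots> \<le> ?M (p 0) (p (g * q))" using True by (intro Max_ge) auto
    finally show ?thesis .
  next
    case False
    then have "card (UNIV :: 'n set) \<le> q" by simp
    then obtain a b where ab: "a < b" "b \<le> q" "p (g * a) = p (g * b)"
      by (rule walk_repeats_at_multiples[of q p g])
    let ?p' = "walk_join (g * a) p (walk_suffix (g * b) p)"
    have "q - (b - a) = (q - b) + a" using ab by simp
    then have len: "g * a + (g * q - g * b) = g * (q - (b - a))"
      by (simp add: add_mult_distrib2 diff_mult_distrib2)
    have closed_part: "walk_weight Z (g * b - g * a) (walk_suffix (g * a) p) \<le> 0"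
      using closed ab by (simp add: walk_suffix_def diff_mult_distrib2)
    have "?p' (g * (q - (b - a))) = p (g * q)"
      using walk_join_end[of p "g * a" "walk_suffix (g * b) p" "g * q - g * b"] ab len
      by (simp add: walk_suffix_def)
    then have rest: "walk_weight Z (g * a + (g * q - g * b)) ?p' \<le> ?M (p 0) (p (g * q))"
      using less.IH[of "q - (b - a)" ?p'] ab len by (cases "g = 0") auto
    have "walk_weight Z (g * q) p
        = walk_weight Z (g * b - g * a) (walk_suffix (g * a) p) + walk_weight Z (g * a + (g * q - g * b)) ?p'"
      using ab by (intro walk_weight_cut) auto
    also have "\<dots> \<le> 0 + ?M (p 0) (p (g * q))" by (rule add_mono[OF closed_part rest])
    finally show ?thesis by simp
  qed
qed

section \<open>Bounds by the CSR terms\<close>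

lemma M_mat_eq_normalize:
  "mcm X = ereal lam \<Longrightarrow>
     M_mat X i j = Max {mp_pow (mp_pow (mp_normalize X lam) (cyclicity X)) k i j | k. k < card (UNIV :: 'n set)}"
  for X :: "('n::finite) mpmat"
  by (simp add: M_mat_def N_mat_def A_lam_eq_normalize)

lemma walk_weight_le_M_mat:
  assumes r: "rmax_mat X" and lam: "mcm X = ereal lam" and "cyclicity X dvd l"
  shows "walk_weight (mp_normalize X lam) l p \<le> M_mat X (p 0) (p l)"
  using assms(3) walk_weight_le_Max_mp_pow[OF rmax_mat_normalize[OF r]
      closed_walk_normalized_nonpos[OF r lam]]
  by (auto simp: M_mat_eq_normalize[OF lam])

lemma M_mat_attained:
  fixes X :: "('n::finite) mpmat"
  assumes r: "rmax_mat X" and lam: "mcm X = ereal lam" and "M_mat X i j \<noteq> -\<infinity>"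
  shows "\<exists>p l. p 0 = i \<and> p l = j \<and> cyclicity X dvd l
               \<and> walk_weight (mp_normalize X lam) l p = M_mat X i j"
proof -
  let ?Z = "mp_normalize X lam"
  have "M_mat X i j \<in> {mp_pow (mp_pow ?Z (cyclicity X)) k i j | k. k < card (UNIV :: 'n set)}"
    unfolding M_mat_eq_normalize[OF lam] using ex_less_card_UNIV by (intro Max_in) auto
  then obtain k where k: "M_mat X i j = mp_pow ?Z (cyclicity X * k) i j"
    using mp_pow_mp_pow[OF rmax_mat_normalize[OF r]] by auto
  then obtain p where "p 0 = i" "p (cyclicity X * k) = j"
    "walk_weight ?Z (cyclicity X * k) p = M_mat X i j"
    using mp_pow_attained[OF rmax_mat_normalize[OF r], where l = "cyclicity X * k" and i = i and j = j] assms(3) by auto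
  then show ?thesis by (intro exI[of _ p] exI[of _ "cyclicity X * k"]) auto
qed

lemma M_mat_not_PInf:
  fixes X :: "('n::finite) mpmat"
  assumes "rmax_mat X" "mcm X = ereal lam"
  shows "M_mat X i j \<noteq> \<infinity>"
proof -
  have "M_mat X i j \<in> {mp_pow (mp_pow (mp_normalize X lam) (cyclicity X)) k i j | k. k < card (UNIV :: 'n set)}"
    unfolding M_mat_eq_normalize[OF assms(2)] using ex_less_card_UNIV by (intro Max_in) auto
  then obtain k where "M_mat X i j = mp_pow (mp_pow (mp_normalize X lam) (cyclicity X)) k i j"
    by blast
  then show ?thesis
    using mp_pow_not_PInf[OF rmax_mat_normalize[OF assms(1)]] mp_pow_mp_pow[OF rmax_mat_normalize[OF assms(1)]]
    by simp
qed

lemma crit_nodes_obtain: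
  assumes "k \<in> crit_nodes X"
  obtains c r where "c \<in> crit_cycles X" "r < length c" "c ! r = k"
  using assms unfolding crit_nodes_def by (auto simp: in_set_conv_nth)

lemma cyc_arcs_rtrancl:
  assumes "cyc_arcs c \<subseteq> E" "a < length c" "b < length c"
  shows "(c ! a, c ! b) \<in> E\<^sup>*"
proof -
  have step: "(c ! a, c ! ((a + d) mod length c)) \<in> E\<^sup>*" for d
  proof (induction d)
    case (Suc d)
    have "length c > 0" using assms(2) by linarith
    then have "(a + d) mod length c < length c" by simp
    then have "(c ! ((a + d) mod length c), c ! (Suc ((a + d) mod length c) mod length c)) \<in> E"
      using assms(1) unfolding cyc_arcs_def by blast
    then show ?case using Suc by (metis mod_Suc_eq add_Suc_right rtrancl_into_rtrancl)
  qed (use assms in simp)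
  have "(a + (b + length c - a)) mod length c = b" using assms by simp
  then show ?thesis using step[of "b + length c - a"] by simp
qed

lemma cyclicity_pos: "cyclicity X > 0"
proof -
  have "scc_gcd X i \<noteq> 0" if i: "i \<in> crit_nodes X" for i
  proof -
    obtain c r where c: "c \<in> crit_cycles X" "r < length c" "c ! r = i"
      using crit_nodes_obtain[OF i] by blast
    have arcs: "cyc_arcs c \<subseteq> crit_arcs X" and nodes: "set c \<subseteq> crit_nodes X"
      using c(1) by (auto simp: crit_arcs_def crit_nodes_def)
    have "set c \<subseteq> crit_scc X i"
      unfolding crit_scc_def using cyc_arcs_rtrancl[OF arcs] c nodes
      by (auto simp: in_set_conv_nth)
    moreover have "is_cycle_in (crit_arcs X) c"
      using c(1) arcs by (auto simp: crit_cycles_def cycles_def is_cycle_in_def)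
    moreover have "length c \<noteq> 0" using c by auto
    ultimately have "\<not> {length c | c. is_cycle_in (crit_arcs X) c \<and> set c \<subseteq> crit_scc X i} \<subseteq> {0}"
      by blast
    then show ?thesis unfolding scc_gcd_def by simp
  qed
  then have "0 \<notin> scc_gcd X ` crit_nodes X" by force
  then have "Lcm (scc_gcd X ` crit_nodes X) \<noteq> 0" using Lcm_0_iff[of "scc_gcd X ` crit_nodes X"] by simp
  then show ?thesis unfolding cyclicity_def by (simp del: Lcm_0_iff_nat)
qed

definition cycle_walk :: "'a list \<Rightarrow> nat \<Rightarrow> nat \<Rightarrow> 'a" where
  "cycle_walk c r = (\<lambda>m. c ! ((r + m) mod length c))"

lemma cycle_walk_arc: "c \<noteq> [] \<Longrightarrow> (cycle_walk c r m, cycle_walk c r (Suc m)) \<in> cyc_arcs c"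
  unfolding cycle_walk_def cyc_arcs_def by (force simp: mod_Suc_eq)

lemma cycle_walk_suffix: "walk_suffix k (cycle_walk c r) = cycle_walk c (r + k)"
  by (simp add: walk_suffix_def cycle_walk_def fun_eq_iff ac_simps)

lemma cycle_walk_period: "cycle_walk c (r + length c * k) = cycle_walk c r"
proof -
  have "(r + length c * k + m) mod length c = (r + m) mod length c" for m
    by (metis add.commute add.left_commute mod_mult_self2)
  then show ?thesis by (simp add: cycle_walk_def)
qed

lemma crit_cycle_normalized_weight:
  assumes r: "rmax_mat X" and lam: "mcm X = ereal lam" and c: "c \<in> crit_cycles X"
  shows "walk_weight (mp_normalize X lam) (length c) (cycle_walk c r) = 0"
proof -
  let ?Z = "mp_normalize X lam"
  have cc: "c \<in> cycles X" using c by (simp add: crit_cycles_def)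
  obtain w where w: "cyc_weight X c = ereal w" using cyc_weight_finite[OF r cc] .
  have "cyc_mean X c = ereal lam" using c lam by (simp add: crit_cycles_def)
  then have "w = lam * length c"
    using cyc_mean_ereal[OF cc w] cycle_length_pos[OF cc] by (simp add: field_simps)
  then have "ereal (lam * length c) = walk_weight ?Z (length c) (cycle_walk c 0) + ereal (lam * length c)"
    using w cyc_weight_eq_walk_weight[of X c] walk_weight_normalize[OF r, of "length c" _ lam]
    by (simp add: cycle_walk_def)
  then have zero: "walk_weight ?Z (length c) (cycle_walk c 0) = 0"
    using walk_weight_not_PInf[OF rmax_mat_normalize[OF r]]
    by (cases "walk_weight ?Z (length c) (cycle_walk c 0)") (auto simp: zero_ereal_def)
  have "walk_weight ?Z (r + length c) (cycle_walk c 0)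
      = walk_weight ?Z r (cycle_walk c 0) + walk_weight ?Z (length c) (cycle_walk c r)"
    using walk_weight_add[of ?Z r "length c" "cycle_walk c 0"] by (simp add: cycle_walk_suffix)
  moreover have "walk_weight ?Z (length c + r) (cycle_walk c 0)
      = walk_weight ?Z (length c) (cycle_walk c 0) + walk_weight ?Z r (cycle_walk c 0)"
    using walk_weight_add[of ?Z "length c" r "cycle_walk c 0"] cycle_walk_period[of c 0 1]
    by (simp add: cycle_walk_suffix)
  ultimately have sum: "walk_weight ?Z r (cycle_walk c 0) + walk_weight ?Z (length c) (cycle_walk c r)
      = walk_weight ?Z r (cycle_walk c 0) + 0"
    using zero by (simp add: add.commute)
  have "walk_weight ?Z r (cycle_walk c 0) \<noteq> -\<infinity>"
    using cycle_walk_arc[of c 0] cc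
    unfolding walk_weight_eq_MInf_iff[OF rmax_mat_normalize[OF r]] normalize_eq_MInf_iff
    by (auto simp: cycles_def is_cycle_in_def arcs_def)
  then have "walk_weight ?Z r (cycle_walk c 0) = \<infinity> \<or> walk_weight ?Z (length c) (cycle_walk c r) = 0"
    using sum ereal_add_cancel_left by blast
  then show ?thesis using walk_weight_not_PInf[OF rmax_mat_normalize[OF r]] by blast
qed

lemma crit_node_on_zero_walk:
  assumes r: "rmax_mat X" and lam: "mcm X = ereal lam" and k: "k \<in> crit_nodes X"
  obtains L q where "L > 0" "q 0 = k" "\<And>m. (q m, q (Suc m)) \<in> crit_arcs X"
    "\<And>m. q m \<in> crit_nodes X" "\<And>M. q (L * M) = k"
    "\<And>M. walk_weight (mp_normalize X lam) (L * M) q = 0"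
proof -
  obtain c r0 where c: "c \<in> crit_cycles X" "r0 < length c" "c ! r0 = k"
    using crit_nodes_obtain[OF k] by blast
  let ?q = "cycle_walk c r0"
  have ne: "c \<noteq> []" using c(2) by auto
  have zero: "walk_weight (mp_normalize X lam) (length c * M) ?q = 0" for M
  proof (induction M)
    case (Suc M)
    have "walk_weight (mp_normalize X lam) (length c * M + length c) ?q
        = walk_weight (mp_normalize X lam) (length c * M) ?q
          + walk_weight (mp_normalize X lam) (length c) (cycle_walk c (r0 + length c * M))"
      by (simp only: walk_weight_add cycle_walk_suffix)
    then show ?case
      using Suc cycle_walk_period[of c r0 M] crit_cycle_normalized_weight[OF r lam c(1)]
      by (simp add: add.commute)
  qed simp
  have arcs: "(?q m, ?q (Suc m)) \<in> crit_arcs X" for m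
    using cycle_walk_arc[OF ne] c(1) by (auto simp: crit_arcs_def)
  have nodes: "?q m \<in> crit_nodes X" for m
    using ne c(1) by (auto simp: crit_nodes_def cycle_walk_def intro!: bexI[of _ c])
  have ends: "?q (length c * M) = k" for M
    using c(2,3) by (simp add: cycle_walk_def)
  show ?thesis
    using ne c(2,3) by (intro that[of "length c" ?q] zero arcs nodes ends) (simp_all add: cycle_walk_def)
qed

lemma CStR_ge:
  assumes "mcm X \<noteq> -\<infinity>"
  shows "C_mat X i k + mp_pow (S_mat X) t k l + R_mat X l j \<le> CStR X t i j"
proof -
  have "C_mat X i k + mp_pow (S_mat X) t k l + R_mat X l j
      \<le> mp_mult (C_mat X) (mp_pow (S_mat X) t) i l + R_mat X l j"
    by (intro add_right_mono mp_mult_ge)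
  also have "\<dots> \<le> CStR X t i j" using assms by (simp add: CStR_def mp_mult_ge)
  finally show ?thesis .
qed

lemma walk_join_le_C_mat:
  assumes r: "rmax_mat X" and lam: "mcm X = ereal lam" and "cyclicity X dvd l1 + l2"
    and "p l1 = q 0" "q l2 \<in> crit_nodes X"
  shows "walk_weight (mp_normalize X lam) l1 p + walk_weight (mp_normalize X lam) l2 q
           \<le> C_mat X (p 0) (q l2)"
proof -
  have "walk_weight (mp_normalize X lam) (l1 + l2) (walk_join l1 p q)
      \<le> M_mat X (walk_join l1 p q 0) (walk_join l1 p q (l1 + l2))"
    by (rule walk_weight_le_M_mat[OF r lam assms(3)])
  then show ?thesis using assms(4,5) by (simp add: walk_weight_join walk_join_end C_mat_def)
qed

lemma walk_join_le_R_mat: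
  assumes r: "rmax_mat X" and lam: "mcm X = ereal lam" and "cyclicity X dvd l1 + l2"
    and "p l1 = q 0" "p 0 \<in> crit_nodes X"
  shows "walk_weight (mp_normalize X lam) l1 p + walk_weight (mp_normalize X lam) l2 q
           \<le> R_mat X (p 0) (q l2)"
proof -
  have "walk_weight (mp_normalize X lam) (l1 + l2) (walk_join l1 p q)
      \<le> M_mat X (walk_join l1 p q 0) (walk_join l1 p q (l1 + l2))"
    by (rule walk_weight_le_M_mat[OF r lam assms(3)])
  then show ?thesis using assms(4,5) by (simp add: walk_weight_join walk_join_end R_mat_def)
qed

lemma crit_walk_le_S_mat_pow:
  assumes r: "rmax_mat X" and "\<And>m. m < t \<Longrightarrow> (p m, p (Suc m)) \<in> crit_arcs X"
  shows "walk_weight (mp_normalize X lam) t p + ereal (lam * t) \<le> mp_pow (S_mat X) t (p 0) (p t)"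
proof -
  have "walk_weight (S_mat X) t p = walk_weight X t p"
    unfolding walk_weight_def S_mat_def using assms(2) by (intro sum.cong) auto
  then show ?thesis
    using walk_weight_le_mp_pow[of "S_mat X" t p] walk_weight_normalize[OF r, of t p lam] by simp
qed

text \<open>
  Padding for the walk in \<open>crit_walk_le_CStR\<close>: go \<open>d\<close> steps around the critical cycle so that the first
  piece has length divisible by \<open>g\<close>, then \<open>t\<close> steps, then \<open>e\<close> steps to close up the loop.
\<close>

lemma loop_padding:
  fixes g L s l t :: nat
  assumes g: "g > 0" and "L > 0" "s \<le> l" "l mod g = t mod g"
  obtains d e M where "g dvd s + d" "d + t + e = L * M" "g dvd e + (l - s)"
proof -
  define d where "d = g * s - s"
  define M where "M = g * (d + t + 1)"
  define e where "e = L * M - d - t"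
  have sd: "s + d = g * s" using g by (simp add: d_def)
  have "d + t + 1 \<le> M" unfolding M_def using mult_le_mono1[of 1 g "d + t + 1"] g by simp
  moreover have "M \<le> L * M" using \<open>L > 0\<close> by simp
  ultimately have "d + t \<le> L * M" by linarith
  then have LM: "d + t + e = L * M" by (simp add: e_def)
  have "e + (l - s) + t + g * s = l + L * M" using LM sd \<open>s \<le> l\<close> by linarith
  moreover have "L * M = g * (L * (d + t + 1))" unfolding M_def by (rule mult.left_commute)
  ultimately have "(e + (l - s) + t + g * s) mod g = (l + g * (L * (d + t + 1))) mod g" by simp
  then have "(e + (l - s) + t) mod g = t mod g" using assms(4) by simp
  then have "g dvd e + (l - s)" using mod_eq_dvd_iff_nat[of t "e + (l - s) + t" g] by simp
  then show ?thesis using that[of d e M] sd LM by simp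
qed

lemma crit_walk_le_CStR:
  fixes X :: "('n::finite) mpmat"
  assumes r: "rmax_mat X" and lam: "mcm X = ereal lam" and crit: "p s \<in> crit_nodes X"
    and "s \<le> l" and md: "l mod cyclicity X = t mod cyclicity X"
  shows "walk_weight (mp_normalize X lam) l p + ereal (lam * t) \<le> CStR X t (p 0) (p l)"
proof -
  let ?Z = "mp_normalize X lam" and ?w = "walk_weight (mp_normalize X lam)"
  obtain L q where q: "L > 0" "q 0 = p s" "\<And>m. (q m, q (Suc m)) \<in> crit_arcs X"
    "\<And>m. q m \<in> crit_nodes X" "\<And>M. q (L * M) = p s" "\<And>M. ?w (L * M) q = 0"
    using crit_node_on_zero_walk[OF r lam crit] by metis
  obtain d e M where dem: "cyclicity X dvd s + d" "d + t + e = L * M" "cyclicity X dvd e + (l - s)"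
    by (rule loop_padding[OF cyclicity_pos q(1) \<open>s \<le> l\<close> md])
  have B1: "?w s p + ?w d q \<le> C_mat X (p 0) (q d)"
    using q(2,4) by (intro walk_join_le_C_mat[OF r lam dem(1)]) auto
  have B2: "?w t (walk_suffix d q) + ereal (lam * t) \<le> mp_pow (S_mat X) t (q d) (q (d + t))"
    using crit_walk_le_S_mat_pow[OF r, of t "walk_suffix d q"] q(3) by (simp add: walk_suffix_def)
  have "walk_suffix (d + t) q e = walk_suffix s p 0"
    using q(5) dem(2) by (simp add: walk_suffix_def add.assoc)
  then have "?w e (walk_suffix (d + t) q) + ?w (l - s) (walk_suffix s p)
      \<le> R_mat X (walk_suffix (d + t) q 0) (walk_suffix s p (l - s))"
    using q(4) by (intro walk_join_le_R_mat[OF r lam dem(3)]) (simp_all add: walk_suffix_def)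
  then have B3: "?w e (walk_suffix (d + t) q) + ?w (l - s) (walk_suffix s p) \<le> R_mat X (q (d + t)) (p l)"
    using \<open>s \<le> l\<close> by (simp add: walk_suffix_def)
  have "?w d q + (?w t (walk_suffix d q) + ?w e (walk_suffix (d + t) q)) = ?w (L * M) q"
    unfolding dem(2)[symmetric] walk_weight_add by (simp add: walk_suffix_def add.assoc)
  then have "?w s p + ?w (l - s) (walk_suffix s p) + ereal (lam * t)
      = (?w s p + ?w d q) + (?w t (walk_suffix d q) + ereal (lam * t))
        + (?w e (walk_suffix (d + t) q) + ?w (l - s) (walk_suffix s p))"
    using q(6) by (intro add_zero_loop_rearrange) simp
  then have "?w l p + ereal (lam * t)
      = (?w s p + ?w d q) + (?w t (walk_suffix d q) + ereal (lam * t))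
        + (?w e (walk_suffix (d + t) q) + ?w (l - s) (walk_suffix s p))"
    using walk_weight_add[of ?Z s "l - s" p] \<open>s \<le> l\<close> by simp
  also have "\<dots> \<le> C_mat X (p 0) (q d) + mp_pow (S_mat X) t (q d) (q (d + t)) + R_mat X (q (d + t)) (p l)"
    using B1 B2 B3 by (intro add_mono)
  also have "\<dots> \<le> CStR X t (p 0) (p l)" using lam by (intro CStR_ge) simp
  finally show ?thesis .
qed

lemma CSR_entry_through_crit_arc:
  fixes X :: "('n::finite) mpmat"
  assumes r: "rmax_mat X" and lam: "mcm X = ereal lam" and fin: "CSR X x y \<noteq> -\<infinity>"
  obtains k l where "k \<in> crit_nodes X" "M_mat X x k \<noteq> -\<infinity>" "X k l \<noteq> -\<infinity>" "M_mat X l y \<noteq> -\<infinity>"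
    "CSR X x y = M_mat X x k + X k l + M_mat X l y"
proof -
  have rS: "rmax_mat (S_mat X)" using r by (simp add: rmax_mat_def S_mat_def)
  have "CSR X x y = mp_mult (mp_mult (C_mat X) (S_mat X)) (R_mat X) x y"
    unfolding CSR_def CStR_def mp_pow_1[OF rS] using lam by simp
  moreover obtain l where "mp_mult (mp_mult (C_mat X) (S_mat X)) (R_mat X) x y
      = mp_mult (C_mat X) (S_mat X) x l + R_mat X l y"
    using mp_mult_attained by blast
  moreover obtain k where "mp_mult (C_mat X) (S_mat X) x l = C_mat X x k + S_mat X k l"
    using mp_mult_attained by blast
  ultimately have kl: "CSR X x y = C_mat X x k + S_mat X k l + R_mat X l y" by simp
  have "C_mat X x k \<noteq> \<infinity>" "S_mat X k l \<noteq> \<infinity>" "R_mat X l y \<noteq> \<infinity>"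
    using M_mat_not_PInf[OF r lam] rS by (auto simp: C_mat_def R_mat_def rmax_mat_def)
  then have "C_mat X x k \<noteq> -\<infinity>" "S_mat X k l \<noteq> -\<infinity>" "R_mat X l y \<noteq> -\<infinity>"
    using fin kl by auto
  then show ?thesis
    using that[of k l] kl by (auto simp: C_mat_def S_mat_def R_mat_def split: if_splits)
qed

lemma CSR_attained:
  fixes X :: "('n::finite) mpmat"
  assumes r: "rmax_mat X" and lam: "mcm X = ereal lam" and fin: "CSR X x y \<noteq> -\<infinity>"
  shows "\<exists>w len. w 0 = x \<and> w len = y \<and> len mod cyclicity X = 1 mod cyclicity X
    \<and> walk_weight (mp_normalize X lam) len w = CSR X x y - ereal lam \<and> (\<exists>s\<le>len. w s \<in> crit_nodes X)"
proof -
  let ?Z = "mp_normalize X lam" and ?g = "cyclicity X"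
  obtain k l where k: "k \<in> crit_nodes X" "M_mat X x k \<noteq> -\<infinity>" and arc: "X k l \<noteq> -\<infinity>"
    and l: "M_mat X l y \<noteq> -\<infinity>" and kl: "CSR X x y = M_mat X x k + X k l + M_mat X l y"
    by (rule CSR_entry_through_crit_arc[OF r lam fin])
  obtain w1 l1 where w1: "w1 0 = x" "w1 l1 = k" "?g dvd l1" "walk_weight ?Z l1 w1 = M_mat X x k"
    using M_mat_attained[OF r lam k(2)] by blast
  obtain w3 l3 where w3: "w3 0 = l" "w3 l3 = y" "?g dvd l3" "walk_weight ?Z l3 w3 = M_mat X l y"
    using M_mat_attained[OF r lam l] by blast
  let ?w2 = "walk_join 1 (\<lambda>m. if m = 0 then k else l) w3"
  have w2: "?w2 0 = k" "?w2 (1 + l3) = y"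
    "walk_weight ?Z (1 + l3) ?w2 = ?Z k l + M_mat X l y"
    using w3 walk_weight_join[of "\<lambda>m. if m = 0 then k else l" 1 w3 ?Z l3]
      walk_join_end[of "\<lambda>m. if m = 0 then k else l" 1 w3 l3]
    by (auto simp: walk_weight_def)
  let ?w = "walk_join l1 w1 ?w2"
  have "walk_weight ?Z (l1 + (1 + l3)) ?w = M_mat X x k + (?Z k l + M_mat X l y)"
    using w1 w2 walk_weight_join[of w1 l1 ?w2 ?Z "1 + l3"] by simp
  also have "\<dots> = CSR X x y - ereal lam"
    using kl k(2) arc l M_mat_not_PInf[OF r lam] r
    by (cases "M_mat X x k"; cases "M_mat X l y"; cases "X k l")
       (auto simp: mp_normalize_def rmax_mat_def)
  finally have weight: "walk_weight ?Z (l1 + (1 + l3)) ?w = CSR X x y - ereal lam" .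
  obtain a b where "l1 = ?g * a" "l3 = ?g * b" using w1(3) w3(3) by (elim dvdE)
  then have "l1 + (1 + l3) = 1 + ?g * (a + b)" by (simp add: algebra_simps)
  then have "(l1 + (1 + l3)) mod ?g = 1 mod ?g" by (simp only: mod_mult_self2)
  moreover have "?w l1 = k" "?w 0 = x" "?w (l1 + (1 + l3)) = y"
    using w1 w2 by (auto simp: walk_join_def)
  ultimately show ?thesis using weight k(1)
    by (intro exI[of _ ?w] exI[of _ "l1 + (1 + l3)"]) (auto intro!: exI[of _ l1])
qed

section \<open>Perturbation below the CSR term\<close>

locale csr_perturbation =
  fixes A1 A2 :: "('n::finite) mpmat" and lam :: real
  assumes rmax_A1: "rmax_mat A1" and rmax_A2: "rmax_mat A2"
    and A2_less_CSR: "mp_strict_less A2 (CSR A1)" and mcm_A1: "mcm A1 = ereal lam"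
begin

abbreviation "A \<equiv> mp_add A1 A2"
abbreviation "g \<equiv> cyclicity A1"
abbreviation "Z1 \<equiv> mp_normalize A1 lam"
abbreviation "ZA \<equiv> mp_normalize A lam"

definition A2_arc :: "'n \<Rightarrow> 'n \<Rightarrow> bool" where
  "A2_arc x y \<longleftrightarrow> A2 x y \<noteq> -\<infinity> \<and> A1 x y \<le> A2 x y"

lemma rmax_A: "rmax_mat A"
  using rmax_A1 rmax_A2 by (simp add: rmax_mat_def mp_add_def max_def)

lemma A1_le_A: "A1 i j \<le> A i j"
  by (simp add: mp_add_def)

lemma A_eq_A1: "\<not> A2_arc x y \<Longrightarrow> A x y = A1 x y"
  by (auto simp: A2_arc_def mp_add_def max_def)

lemma A_eq_A2: "A2_arc x y \<Longrightarrow> A x y = A2 x y"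
  by (auto simp: A2_arc_def mp_add_def max_def)

lemma arc_replacement:
  "\<exists>w len. w 0 = x \<and> w len = y \<and> len mod g = 1 mod g \<and> ZA x y \<le> walk_weight Z1 len w
     \<and> (A2_arc x y \<longrightarrow> ZA x y < walk_weight Z1 len w \<and> (\<exists>s\<le>len. w s \<in> crit_nodes A1))"
proof (cases "A2_arc x y")
  case False
  define w where "w = (\<lambda>m::nat. if m = 0 then x else y)"
  have "walk_weight Z1 1 w = Z1 x y" by (simp add: w_def walk_weight_def)
  also have "\<dots> = ZA x y" unfolding mp_normalize_def A_eq_A1[OF False] ..
  finally have "ZA x y \<le> walk_weight Z1 1 w" by simp
  moreover have "w 0 = x" "w 1 = y" by (simp_all add: w_def)
  ultimately show ?thesis using False by blast
next
  case True
  have "A2 x y \<noteq> CSR A1 x y" "A2 x y \<le> CSR A1 x y"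
    using True A2_less_CSR unfolding A2_arc_def mp_strict_less_def by blast+
  then have less: "A2 x y < CSR A1 x y" by simp
  then have "CSR A1 x y \<noteq> -\<infinity>" by auto
  from CSR_attained[OF rmax_A1 mcm_A1 this]
  obtain w len s where w: "w 0 = x" "w len = y" "len mod g = 1 mod g"
    "walk_weight Z1 len w = CSR A1 x y - ereal lam" "s \<le> len" "w s \<in> crit_nodes A1"
    by (elim exE conjE)
  have "A2 x y \<noteq> -\<infinity>" using True by (simp add: A2_arc_def)
  have "ZA x y = A2 x y - ereal lam" using A_eq_A2[OF True] by (simp add: mp_normalize_def)
  also have "\<dots> < CSR A1 x y - ereal lam"
    using less \<open>A2 x y \<noteq> -\<infinity>\<close> by (cases "A2 x y"; cases "CSR A1 x y") auto
  also have "\<dots> = walk_weight Z1 len w" using w(4) ..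
  finally have "ZA x y < walk_weight Z1 len w" .
  then show ?thesis using w(1,2,3,5,6) by (intro exI[of _ w] exI[of _ len]) auto
qed

lemma walk_replacement:
  "\<exists>q l'. q 0 = p 0 \<and> q l' = p l \<and> l' mod g = l mod g \<and> walk_weight ZA l p \<le> walk_weight Z1 l' q
     \<and> ((\<exists>m<l. A2_arc (p m) (p (Suc m))) \<and> walk_weight ZA l p \<noteq> -\<infinity>
          \<longrightarrow> walk_weight ZA l p < walk_weight Z1 l' q \<and> (\<exists>s\<le>l'. q s \<in> crit_nodes A1))"
proof (induction l)
  case 0 then show ?case by (intro exI[of _ p] exI[of _ 0]) simp
next
  case (Suc l)
  obtain q l' where IH: "q 0 = p 0" "q l' = p l" "l' mod g = l mod g"
    "walk_weight ZA l p \<le> walk_weight Z1 l' q"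
    "(\<exists>m<l. A2_arc (p m) (p (Suc m))) \<and> walk_weight ZA l p \<noteq> -\<infinity>
       \<longrightarrow> walk_weight ZA l p < walk_weight Z1 l' q \<and> (\<exists>s\<le>l'. q s \<in> crit_nodes A1)"
    using Suc.IH by (elim exE conjE)
  let ?x = "p l" and ?y = "p (Suc l)"
  obtain w len where w: "w 0 = ?x" "w len = ?y" "len mod g = 1 mod g" "ZA ?x ?y \<le> walk_weight Z1 len w"
    "A2_arc ?x ?y \<longrightarrow> ZA ?x ?y < walk_weight Z1 len w \<and> (\<exists>s\<le>len. w s \<in> crit_nodes A1)"
    using arc_replacement[of ?x ?y] by (elim exE conjE)
  let ?q = "walk_join l' q w"
  have weight: "walk_weight Z1 (l' + len) ?q = walk_weight Z1 l' q + walk_weight Z1 len w"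
    using IH(2) w(1) by (simp add: walk_weight_join)
  have ends: "?q 0 = p 0" "?q (l' + len) = p (Suc l)"
    using IH w by (auto simp: walk_join_end)
  have len: "(l' + len) mod g = Suc l mod g"
    using mod_add_cong[OF IH(3) w(3)] by simp
  have rZA: "rmax_mat ZA" using rmax_mat_normalize[OF rmax_A] .
  have not_PInf: "walk_weight ZA l p \<noteq> \<infinity>" "ZA ?x ?y \<noteq> \<infinity>"
    using walk_weight_not_PInf[OF rZA] rZA by (auto simp: rmax_mat_def)
  have le: "walk_weight ZA (Suc l) p \<le> walk_weight Z1 (l' + len) ?q"
    unfolding walk_weight_Suc weight using IH(4) w(4) by (rule add_mono)
  have "walk_weight ZA (Suc l) p < walk_weight Z1 (l' + len) ?q \<and> (\<exists>s\<le>l' + len. ?q s \<in> crit_nodes A1)"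
    if used: "\<exists>m<Suc l. A2_arc (p m) (p (Suc m))" and fin: "walk_weight ZA (Suc l) p \<noteq> -\<infinity>"
  proof -
    have fin': "walk_weight ZA l p \<noteq> -\<infinity>" using fin not_PInf by (simp add: walk_weight_Suc)
    consider "A2_arc ?x ?y" | "\<exists>m<l. A2_arc (p m) (p (Suc m))"
      using used less_Suc_eq by auto
    then have "(walk_weight ZA l p < walk_weight Z1 l' q \<or> ZA ?x ?y < walk_weight Z1 len w)
        \<and> (\<exists>s\<le>l' + len. ?q s \<in> crit_nodes A1)"
    proof cases
      case 1
      then obtain s where "s \<le> len" "w s \<in> crit_nodes A1" using w(5) by blast
      moreover have "?q (l' + s) = w s" using IH(2) w(1) by (simp add: walk_join_end)
      ultimately show ?thesis using 1 w(5) by (intro conjI disjI2 exI[of _ "l' + s"]) auto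
    next
      case 2
      then obtain s where "s \<le> l'" "q s \<in> crit_nodes A1" "walk_weight ZA l p < walk_weight Z1 l' q"
        using IH(5) fin' by blast
      then show ?thesis by (intro conjI disjI1 exI[of _ s]) (auto simp: walk_join_def)
    qed
    then show ?thesis
      using ereal_add_less_add_finite[OF IH(4) w(4)] fin not_PInf
      by (simp add: walk_weight_Suc weight)
  qed
  then show ?case using ends len le by blast
qed

lemma cycle_avoids_A2_or_mean_less:
  assumes c: "c \<in> cycles A"
  shows "(\<forall>m<length c. \<not> A2_arc (c ! m) (c ! (Suc m mod length c))) \<or> cyc_mean A c < ereal lam"
proof (cases "\<forall>m<length c. \<not> A2_arc (c ! m) (c ! (Suc m mod length c))")
  case False
  define L where "L = length c"
  define p where "p = (\<lambda>m. c ! (m mod L))"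
  have L: "L > 0" using cycle_length_pos[OF c] L_def by simp
  have used: "\<exists>m<L. A2_arc (p m) (p (Suc m))"
    using False unfolding p_def L_def by auto
  have weight: "cyc_weight A c = walk_weight ZA L p + ereal (lam * L)"
    unfolding p_def L_def cyc_weight_eq_walk_weight by (rule walk_weight_normalize[OF rmax_A])
  obtain w where "cyc_weight A c = ereal w" using cyc_weight_finite[OF rmax_A c] .
  then have fin: "walk_weight ZA L p \<noteq> -\<infinity>" using weight by auto
  from walk_replacement[of p L]
  obtain q l' where q: "q 0 = p 0" "q l' = p L" "l' mod g = L mod g"
    "walk_weight ZA L p \<le> walk_weight Z1 l' q"
    "(\<exists>m<L. A2_arc (p m) (p (Suc m))) \<and> walk_weight ZA L p \<noteq> -\<infinity>
       \<longrightarrow> walk_weight ZA L p < walk_weight Z1 l' q \<and> (\<exists>s\<le>l'. q s \<in> crit_nodes A1)"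
    by (elim exE conjE)
  have less: "walk_weight ZA L p < walk_weight Z1 l' q" using q(5) used fin by simp
  have "q 0 = q l'" using q L by (simp add: p_def)
  then have "walk_weight Z1 l' q \<le> 0" by (rule closed_walk_normalized_nonpos[OF rmax_A1 mcm_A1])
  with less have "walk_weight ZA L p < 0" by (rule less_le_trans)
  then have "cyc_weight A c < ereal (lam * L)" using weight fin
    by (cases "walk_weight ZA L p") auto
  then show ?thesis using cyc_mean_less_iff[OF rmax_A c] L_def by simp
qed simp

lemma cycle_of_A1_arcs:
  assumes "c \<in> cycles A" "\<forall>m<length c. \<not> A2_arc (c ! m) (c ! (Suc m mod length c))"
  shows "c \<in> cycles A1" "cyc_weight A c = cyc_weight A1 c"
  using assms A_eq_A1
  by (auto simp: cycles_def is_cycle_in_def cyc_arcs_def arcs_def cyc_weight_def intro!: sum.cong)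

lemma cycles_A1_subset: "cycles A1 \<subseteq> cycles A"
proof -
  have "A i j \<noteq> -\<infinity>" if "A1 i j \<noteq> -\<infinity>" for i j
    using A1_le_A[of i j] that by auto
  then have "arcs A1 \<subseteq> arcs A" by (auto simp: arcs_def)
  then show ?thesis unfolding cycles_def is_cycle_in_def by blast
qed

lemma cyc_mean_A1_le:
  assumes "c \<in> cycles A1"
  shows "cyc_mean A1 c \<le> cyc_mean A c"
proof -
  have "cyc_weight A1 c \<le> cyc_weight A c"
    unfolding cyc_weight_def using A1_le_A by (intro sum_mono) auto
  moreover have "0 < ereal (real (length c))" using cycle_length_pos[OF assms] by simp
  ultimately show ?thesis unfolding cyc_mean_def by (rule ereal_divide_right_mono)
qed

lemma mcm_eq: "mcm A = ereal lam"
proof (rule antisym)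
  show "mcm A \<le> ereal lam" unfolding mcm_def
  proof (rule SUP_least)
    fix c assume c: "c \<in> cycles A"
    show "cyc_mean A c \<le> ereal lam"
      using cycle_avoids_A2_or_mean_less[OF c]
    proof
      assume A1_arcs: "\<forall>m<length c. \<not> A2_arc (c ! m) (c ! (Suc m mod length c))"
      have "cyc_mean A c = cyc_mean A1 c"
        using cycle_of_A1_arcs[OF c A1_arcs] by (simp add: cyc_mean_def)
      also have "\<dots> \<le> mcm A1" using cycle_of_A1_arcs(1)[OF c A1_arcs] by (rule cyc_mean_le_mcm)
      finally show ?thesis using mcm_A1 by simp
    qed simp
  qed
  show "ereal lam \<le> mcm A" unfolding mcm_A1[symmetric] mcm_def[of A1]
  proof (rule SUP_least)
    fix c assume c: "c \<in> cycles A1"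
    show "cyc_mean A1 c \<le> mcm A"
      using cyc_mean_A1_le[OF c] cyc_mean_le_mcm[OF cycles_A1_subset[THEN subsetD, OF c]]
      by (rule order_trans)
  qed
qed

lemma crit_cycles_eq: "crit_cycles A = crit_cycles A1"
proof (intro equalityI subsetI)
  fix c assume c: "c \<in> crit_cycles A"
  then have cA: "c \<in> cycles A" and mean: "cyc_mean A c = ereal lam"
    using mcm_eq by (auto simp: crit_cycles_def)
  then have "\<forall>m<length c. \<not> A2_arc (c ! m) (c ! (Suc m mod length c))"
    using cycle_avoids_A2_or_mean_less[OF cA] by auto
  then show "c \<in> crit_cycles A1"
    using cycle_of_A1_arcs[OF cA] mean mcm_A1 by (auto simp: crit_cycles_def cyc_mean_def)
next
  fix c assume c: "c \<in> crit_cycles A1"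
  then have cA1: "c \<in> cycles A1" and mean: "cyc_mean A1 c = ereal lam"
    using mcm_A1 by (auto simp: crit_cycles_def)
  have cA: "c \<in> cycles A" using cycles_A1_subset cA1 by blast
  have "cyc_mean A c \<le> ereal lam" using cyc_mean_le_mcm[OF cA] mcm_eq by simp
  moreover have "ereal lam \<le> cyc_mean A c" using cyc_mean_A1_le[OF cA1] mean by simp
  ultimately show "c \<in> crit_cycles A" using cA mcm_eq by (auto simp: crit_cycles_def)
qed

lemma crit_nodes_eq: "crit_nodes A = crit_nodes A1"
  unfolding crit_nodes_def crit_cycles_eq ..

lemma crit_arcs_eq: "crit_arcs A = crit_arcs A1"
  unfolding crit_arcs_def crit_cycles_eq ..

lemma crit_eq: "crit A = crit A1"
  unfolding crit_def crit_nodes_eq crit_arcs_eq ..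

lemma cyclicity_eq: "cyclicity A = cyclicity A1"
  unfolding cyclicity_def scc_gcd_def crit_scc_def crit_nodes_eq crit_arcs_eq ..

lemma S_mat_eq: "S_mat A = S_mat A1"
proof -
  have "A x y = A1 x y" if xy: "(x, y) \<in> crit_arcs A1" for x y
  proof -
    obtain c where c: "c \<in> crit_cycles A1" "(x, y) \<in> cyc_arcs c"
      using xy unfolding crit_arcs_def by blast
    then obtain m where m: "m < length c" "x = c ! m" "y = c ! (Suc m mod length c)"
      unfolding cyc_arcs_def by blast
    have cA: "c \<in> cycles A" "cyc_mean A c = ereal lam"
      using c(1) crit_cycles_eq mcm_eq by (auto simp: crit_cycles_def)
    then have "\<forall>m<length c. \<not> A2_arc (c ! m) (c ! (Suc m mod length c))"
      using cycle_avoids_A2_or_mean_less[OF cA(1)] by auto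
    then show ?thesis using m A_eq_A1 by blast
  qed
  then show ?thesis unfolding S_mat_def crit_arcs_eq by (auto simp: fun_eq_iff)
qed

lemma M_mat_eq: "M_mat A i j = M_mat A1 i j"
proof -
  let ?SA = "{mp_pow (mp_pow ZA g) k i j | k. k < card (UNIV :: 'n set)}"
  let ?S1 = "{mp_pow (mp_pow Z1 g) k i j | k. k < card (UNIV :: 'n set)}"
  have MA: "M_mat A i j = Max ?SA" using M_mat_eq_normalize[OF mcm_eq] cyclicity_eq by simp
  have M1: "M_mat A1 i j = Max ?S1" using M_mat_eq_normalize[OF mcm_A1] by simp
  show ?thesis
  proof (rule antisym)
    show "M_mat A i j \<le> M_mat A1 i j" unfolding MA
    proof (rule Max.boundedI)
      fix x assume "x \<in> ?SA"
      then obtain k where x: "x = mp_pow ZA (g * k) i j"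
        using mp_pow_mp_pow[OF rmax_mat_normalize[OF rmax_A]] by auto
      show "x \<le> M_mat A1 i j"
      proof (cases "x = -\<infinity>")
        case False
        obtain p where p: "p 0 = i" "p (g * k) = j" "walk_weight ZA (g * k) p = x"
          using mp_pow_attained[OF rmax_mat_normalize[OF rmax_A], where l = "g * k" and i = i and j = j] False x by auto
        from walk_replacement[of p "g * k"]
        obtain q l' where q: "q 0 = p 0" "q l' = p (g * k)" "l' mod g = (g * k) mod g"
          "walk_weight ZA (g * k) p \<le> walk_weight Z1 l' q"
          "(\<exists>m<g * k. A2_arc (p m) (p (Suc m))) \<and> walk_weight ZA (g * k) p \<noteq> -\<infinity>
             \<longrightarrow> walk_weight ZA (g * k) p < walk_weight Z1 l' q \<and> (\<exists>s\<le>l'. q s \<in> crit_nodes A1)"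
          by (elim exE conjE)
        have "g dvd l'" using q(3) by (simp add: mod_eq_0_iff_dvd)
        then show ?thesis
          using walk_weight_le_M_mat[OF rmax_A1 mcm_A1, of l' q] p q by simp
      qed simp
    qed (use ex_less_card_UNIV in auto)
  next
    show "M_mat A1 i j \<le> M_mat A i j" unfolding M1
    proof (rule Max.boundedI)
      fix x assume "x \<in> ?S1"
      then obtain k where x: "x = mp_pow Z1 (g * k) i j" "k < card (UNIV :: 'n set)"
        using mp_pow_mp_pow[OF rmax_mat_normalize[OF rmax_A1]] by auto
      have "x \<le> mp_pow ZA (g * k) i j"
        unfolding x using mp_pow_mono[OF rmax_mat_normalize[OF rmax_A1]] A1_le_A
        by (simp add: mp_normalize_def ereal_minus_mono)
      also have "\<dots> \<le> Max ?SA"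
        using x mp_pow_mp_pow[OF rmax_mat_normalize[OF rmax_A]] by (intro Max_ge) auto
      finally show "x \<le> M_mat A i j" using MA by simp
    qed (use ex_less_card_UNIV in auto)
  qed
qed

lemma CStR_eq: "CStR A t = CStR A1 t"
proof -
  have "C_mat A = C_mat A1" "R_mat A = R_mat A1"
    unfolding C_mat_def R_mat_def crit_nodes_eq using M_mat_eq by (simp_all add: fun_eq_iff)
  then show ?thesis unfolding CStR_def mcm_eq mcm_A1 S_mat_eq by simp
qed

lemma walk_with_A2_arc_below_CStR:
  assumes "\<exists>m<t. A2_arc (p m) (p (Suc m))" and "walk_weight A t p \<noteq> -\<infinity>"
  shows "walk_weight A t p < CStR A1 t (p 0) (p t)"
proof -
  have weight: "walk_weight A t p = walk_weight ZA t p + ereal (lam * t)"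
    by (rule walk_weight_normalize[OF rmax_A])
  then have fin: "walk_weight ZA t p \<noteq> -\<infinity>" using assms(2) by auto
  from walk_replacement[of p t]
  obtain q l' where q: "q 0 = p 0" "q l' = p t" "l' mod g = t mod g"
    "walk_weight ZA t p \<le> walk_weight Z1 l' q"
    "(\<exists>m<t. A2_arc (p m) (p (Suc m))) \<and> walk_weight ZA t p \<noteq> -\<infinity>
       \<longrightarrow> walk_weight ZA t p < walk_weight Z1 l' q \<and> (\<exists>s\<le>l'. q s \<in> crit_nodes A1)"
    by (elim exE conjE)
  then obtain s where strict: "walk_weight ZA t p < walk_weight Z1 l' q"
    and s: "s \<le> l'" "q s \<in> crit_nodes A1"
    using assms(1) fin by auto
  have "walk_weight ZA t p + ereal (lam * t) < walk_weight Z1 l' q + ereal (lam * t)"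
    using strict by (cases "walk_weight ZA t p"; cases "walk_weight Z1 l' q") auto
  also have "\<dots> \<le> CStR A1 t (p 0) (p t)"
    using crit_walk_le_CStR[where p = q and s = s and l = l' and t = t,
        OF rmax_A1 mcm_A1 s(2) s(1) q(3)] q(1,2)
    by simp
  finally show ?thesis using weight by simp
qed

abbreviation "B \<equiv> B_N A"
abbreviation "B1 \<equiv> B_N A1"

text \<open>
  An optimal walk for an entry of \<open>A\<^sup>t\<close> or \<open>B\<^sub>N\<^sup>t\<close> either avoids the arcs of \<open>A\<^sub>2\<close>, and then the
  entry is the one for \<open>A\<^sub>1\<close>, or it uses one, and then the entry lies below \<open>CS\<^sup>tR[A\<^sub>1]\<close>.
\<close>

lemma mp_pow_perturbed_cases:
  assumes rX: "rmax_mat X" and rX1: "rmax_mat X1" and X1_le: "\<And>x y. X1 x y \<le> X x y"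
    and X_sub: "\<And>x y. X x y \<noteq> -\<infinity> \<Longrightarrow> X x y = A x y"
    and X_eq: "\<And>x y. \<not> A2_arc x y \<Longrightarrow> X x y = X1 x y"
  shows "mp_pow X t i j = mp_pow X1 t i j \<or> mp_pow X t i j < CStR A1 t i j"
proof (cases "mp_pow X t i j = -\<infinity>")
  case True
  then show ?thesis using mp_pow_mono[OF rX1 X1_le, of t i j] by simp
next
  case False
  obtain p where p: "p 0 = i" "p t = j" "walk_weight X t p = mp_pow X t i j"
    using mp_pow_attained[OF rX False] by blast
  have ge: "mp_pow X1 t i j \<le> mp_pow X t i j" by (rule mp_pow_mono[OF rX1 X1_le])
  show ?thesis
  proof (cases "\<exists>m<t. A2_arc (p m) (p (Suc m))")
    case True
    have "\<forall>m<t. X (p m) (p (Suc m)) \<noteq> -\<infinity>"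
      using False p walk_weight_eq_MInf_iff[OF rX] by metis
    then have "walk_weight X t p = walk_weight A t p"
      unfolding walk_weight_def using X_sub by (intro sum.cong) auto
    then show ?thesis using walk_with_A2_arc_below_CStR[OF True] p False by simp
  next
    case False
    then have "walk_weight X t p = walk_weight X1 t p"
      unfolding walk_weight_def using X_eq by (intro sum.cong) auto
    then show ?thesis using walk_weight_le_mp_pow[of X1 t p] p ge by simp
  qed
qed

lemma CStR_B_N_decomposition_eq:
  "mp_pow A t = mp_add (CStR A t) (mp_pow B t) \<longleftrightarrow>
   mp_pow A1 t = mp_add (CStR A1 t) (mp_pow B1 t)"
proof -
  have rB: "rmax_mat B" and rB1: "rmax_mat B1"
    using rmax_A rmax_A1 by (auto simp: rmax_mat_def B_N_def)
  have "mp_pow A t i j = max (CStR A1 t i j) (mp_pow B t i j) \<longleftrightarrow>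
        mp_pow A1 t i j = max (CStR A1 t i j) (mp_pow B1 t i j)" for i j
  proof (rule max_eq_transfer)
    show "mp_pow A t i j = mp_pow A1 t i j \<or> mp_pow A t i j < CStR A1 t i j"
      by (rule mp_pow_perturbed_cases[OF rmax_A rmax_A1 A1_le_A]) (simp_all add: A_eq_A1)
    show "mp_pow B t i j = mp_pow B1 t i j \<or> mp_pow B t i j < CStR A1 t i j"
      by (rule mp_pow_perturbed_cases[OF rB rB1])
         (auto simp: B_N_def crit_nodes_eq A1_le_A A_eq_A1)
    show "mp_pow A1 t i j \<le> mp_pow A t i j" by (rule mp_pow_mono[OF rmax_A1 A1_le_A])
    show "mp_pow B1 t i j \<le> mp_pow B t i j"
      by (rule mp_pow_mono[OF rB1]) (simp add: B_N_def crit_nodes_eq A1_le_A)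
  qed
  then show ?thesis unfolding CStR_eq mp_add_def[of "CStR A1 t"] fun_eq_iff by simp
qed

lemma T1_eq: "T1 A = T1 A1"
  unfolding T1_def by (simp only: CStR_B_N_decomposition_eq)

end

theorem lemmal:
  fixes A1 A2 :: "('n::finite) mpmat"
  assumes "rmax_mat A1" and "rmax_mat A2"
    and "mp_strict_less A2 (CSR A1)"
  shows "mcm (mp_add A1 A2) = mcm A1
       \<and> crit (mp_add A1 A2) = crit A1
       \<and> (\<forall>t\<ge>1. CStR (mp_add A1 A2) t = CStR A1 t)
       \<and> T1 (mp_add A1 A2) = T1 A1"
proof (cases "mcm A1 = -\<infinity>")
  case True
  then have "CSR A1 = mp_bot" by (simp add: CSR_def CStR_def)
  then have "A2 = mp_bot" using assms(3) by (auto simp: mp_strict_less_def mp_bot_def fun_eq_iff)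
  then have "mp_add A1 A2 = A1" by (simp add: mp_add_def mp_bot_def fun_eq_iff)
  then show ?thesis by simp
next
  case False
  then obtain lam where "mcm A1 = ereal lam"
    using mcm_not_PInf[OF assms(1)] by (cases "mcm A1") auto
  then interpret csr_perturbation A1 A2 lam using assms by unfold_locales
  show ?thesis using mcm_eq mcm_A1 crit_eq CStR_eq T1_eq by simp
qed

end
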